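(* Let $\mathcal{A}$ be an arrangement of distinct lines in $\mathbb{P}^2_{\mathbb{C}}$. If $\mathcal{R}(I(\mathcal{A}))$ is disconnected (in the classical topology), then there exists a nonempty subarrangement $\mathcal{A}'\subset\mathcal{A}$ such that $|\operatorname{mult}(\mathcal{A}')\cap H|\ge 3$ for all $H\in\mathcal{A}'$.
   Context: $\operatorname{mult}(\mathcal{B})$ is the set of points of $\mathbb{P}^2$ lying on at least three lines of the arrangement $\mathcal{B}$. Lines are identified with points of $(\mathbb{P}^2)^*$ via their coefficients; $I(\mathcal{A})$ is the set of triples $\{i,j,k\}$ with $H_i\cap H_j\cap H_k\neq\emptyset$; $\mathcal{R}(I)=\{(H_1,\dots,H_n)\in((\mathbb{P}^2)^* )^n: H_i\ne H_j\ (i\ne j),\ \det(H_i,H_j,H_k)=0 \text{ iff } \{i,j,k\}\in I\}$, where $\det$ is the determinant of the coefficient rows. *)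

theory Defs
  imports "HOL-Analysis.Analysis"
begin

text \<open>Points of the complex projective plane P^2 (and of its dual) are represented
  as equivalence classes of nonzero vectors in C^3 under nonzero scaling.\<close>

definition proj_pt :: "complex^3 \<Rightarrow> (complex^3) set" where
  "proj_pt v = {c *s v | c. c \<noteq> 0}"

definition P2 :: "(complex^3) set set" where
  "P2 = {proj_pt v | v. v \<noteq> 0}"

definition pair3 :: "complex^3 \<Rightarrow> complex^3 \<Rightarrow> complex" where
  "pair3 a x = (\<Sum>k\<in>UNIV. a $ k * x $ k)"

definition on_line :: "complex^3 \<Rightarrow> (complex^3) set \<Rightarrow> bool" where
  "on_line a p \<longleftrightarrow> (\<exists>x. x \<noteq> 0 \<and> p = proj_pt x \<and> pair3 a x = 0)"

definition line_pts :: "complex^3 \<Rightarrow> (complex^3) set set" where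
  "line_pts a = {p \<in> P2. on_line a p}"

definition det3 :: "complex^3 \<Rightarrow> complex^3 \<Rightarrow> complex^3 \<Rightarrow> complex" where
  "det3 a b c = det ((\<chi> r. if r = 1 then a else if r = 2 then b else c) :: complex^3^3)"

definition line_arrangement :: "(complex^3)^'n::finite \<Rightarrow> bool" where
  "line_arrangement H \<longleftrightarrow> (\<forall>i. H $ i \<noteq> 0) \<and>
     (\<forall>i j. i \<noteq> j \<longrightarrow> proj_pt (H $ i) \<noteq> proj_pt (H $ j))"

definition mult_pts :: "(complex^3)^'n::finite \<Rightarrow> 'n set \<Rightarrow> (complex^3) set set" where
  "mult_pts H S = {p \<in> P2. card {i \<in> S. on_line (H $ i) p} \<ge> 3}"

definition intersection_lattice :: "(complex^3)^'n::finite \<Rightarrow> 'n set set" where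
  "intersection_lattice H = {{i, j, k} | i j k. i \<noteq> j \<and> j \<noteq> k \<and> i \<noteq> k \<and>
      line_pts (H $ i) \<inter> line_pts (H $ j) \<inter> line_pts (H $ k) \<noteq> {}}"

definition nonzero_tuples :: "((complex^3)^'n::finite) set" where
  "nonzero_tuples = {H. \<forall>i. H $ i \<noteq> 0}"

definition proj_tuple :: "(complex^3)^'n::finite \<Rightarrow> ('n::finite \<Rightarrow> (complex^3) set)" where
  "proj_tuple H = (\<lambda>i. proj_pt (H $ i))"

text \<open>Classical topology on ((P^2)^* )^n: quotient topology of the Euclidean
  topology on (C^3 - 0)^n under the projection.\<close>
definition proj_tuple_topology :: "('n::finite \<Rightarrow> (complex^3) set) topology" where
  "proj_tuple_topology = topology (\<lambda>U. U \<subseteq> proj_tuple ` nonzero_tuples \<and>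
      openin (top_of_set nonzero_tuples) {H \<in> nonzero_tuples. proj_tuple H \<in> U})"

lemma istopology_proj_tuple:
  "istopology (\<lambda>U. U \<subseteq> proj_tuple ` nonzero_tuples \<and>
      openin (top_of_set nonzero_tuples) {H \<in> nonzero_tuples. proj_tuple H \<in> U})"
proof -
  have 1: "{H \<in> nonzero_tuples. proj_tuple H \<in> S \<inter> T} =
     {H \<in> nonzero_tuples. proj_tuple H \<in> S} \<inter> {H \<in> nonzero_tuples. proj_tuple H \<in> T}" for S T
    by auto
  have 2: "{H \<in> nonzero_tuples. proj_tuple H \<in> \<Union>K} =
     \<Union>((\<lambda>U. {H \<in> nonzero_tuples. proj_tuple H \<in> U}) ` K)" for K
    by auto
  show ?thesis unfolding istopology_def 1 2 by (auto intro: openin_Union)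
qed

definition realization_space :: "'n set set \<Rightarrow> ('n::finite \<Rightarrow> (complex^3) set) set" where
  "realization_space I = {proj_tuple G | G. G \<in> nonzero_tuples \<and>
      (\<forall>i j. i \<noteq> j \<longrightarrow> proj_pt (G $ i) \<noteq> proj_pt (G $ j)) \<and>
      (\<forall>i j k. i \<noteq> j \<and> j \<noteq> k \<and> i \<noteq> k \<longrightarrow>
          (det3 (G $ i) (G $ j) (G $ k) = 0 \<longleftrightarrow> {i, j, k} \<in> I))}"

end

theory Submission
  imports Defs "HOL-Computational_Algebra.Polynomial"
begin

text \<open>
  We prove the contrapositive.  Suppose every nonempty subarrangement S has a line j \<in> S
  meeting at most two points of mult(S).  Removing such lines one at a time and reading the
  sequence backwards, the arrangement is built line by line, each new line passing through at
  most two multiple points of the lines present so far.  Along this order we construct a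
  polynomial parametrization \<Phi> of all realizations: the vector of a new line is a free
  parameter (no multiple point), a combination of the two vectors through its multiple point
  (one point), or the cross product of its two multiple points (two points).  Every
  realization is then, up to rescaling, some \<Phi> z, and each \<Phi> z satisfies all concurrences
  of the arrangement.  Hence R(I) is the projection of \<Phi> applied to the set of parameters
  z for which \<Phi> z is a realization.  That set is the complement of finitely many polynomial
  hypersurfaces, so it meets every complex line through one of its points in a cofinite set;
  as C minus finitely many points is path-connected, R(I) is path-connected, hence connected.
\<close>
text \<open>The cross product on C^3.  With pair3 as the pairing between lines and points,
  cross a b represents the common point of the lines a and b, and
  det3 a b c = pair3 c (cross a b).\<close>
definition cross :: "complex^3 \<Rightarrow> complex^3 \<Rightarrow> complex^3" where
  "cross u v = vector [u$2 * v$3 - u$3 * v$2, u$3 * v$1 - u$1 * v$3, u$1 * v$2 - u$2 * v$1]"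

lemma vec3_eq_iff: "(u::complex^3) = v \<longleftrightarrow> u$1 = v$1 \<and> u$2 = v$2 \<and> u$3 = v$3"
  by (simp add: vec_eq_iff forall_3)

lemma cross_nth [simp]:
  "cross u v $ 1 = u$2 * v$3 - u$3 * v$2"
  "cross u v $ 2 = u$3 * v$1 - u$1 * v$3"
  "cross u v $ 3 = u$1 * v$2 - u$2 * v$1"
  by (simp_all add: cross_def)

lemma pair3_expand: "pair3 a x = a$1 * x$1 + a$2 * x$2 + a$3 * x$3"
  by (simp add: pair3_def sum_3)

lemma pair3_commute: "pair3 a x = pair3 x a"
  unfolding pair3_expand by (simp add: algebra_simps)

lemma det3_eq_pair3_cross: "det3 a b c = pair3 c (cross a b)"
  unfolding det3_def det_3 pair3_expand by (simp add: algebra_simps)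

lemma det3_cycle: "det3 a b c = det3 b c a"
  and det3_repeated: "det3 a a c = 0" "det3 a b a = 0" "det3 a b b = 0"
  unfolding det3_eq_pair3_cross pair3_expand by (simp_all add: algebra_simps)

lemma det3_linear: "det3 x y (s *s a + t *s b) = s * det3 x y a + t * det3 x y b"
  unfolding det3_eq_pair3_cross pair3_expand by (simp add: algebra_simps)

lemma det3_smult: "det3 (a *s x) (b *s y) (c *s z) = a * b * c * det3 x y z"
  unfolding det3_eq_pair3_cross pair3_expand by (simp add: algebra_simps)

lemma cross_smult: "cross (a *s x) (b *s y) = (a * b) *s cross x y"
  by (simp add: vec3_eq_iff algebra_simps)

lemma pair3_smult: "pair3 a (c *s x) = c * pair3 a x"
  unfolding pair3_expand by (simp add: algebra_simps)

lemma cross_antisym: "cross a b = - cross b a"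
  by (simp add: vec3_eq_iff algebra_simps)

lemma cross_self: "cross a a = 0"
  by (simp add: vec3_eq_iff algebra_simps)

lemma cross_cross: "cross (cross a b) x = pair3 a x *s b - pair3 b x *s a"
  unfolding pair3_expand by (simp add: vec3_eq_iff algebra_simps)

lemma cross_cross_cross: "cross (cross a b) (cross c d) = det3 c d a *s b - det3 c d b *s a"
  unfolding det3_eq_pair3_cross pair3_expand by (simp add: vec3_eq_iff algebra_simps)

lemma cross_eq_0_imp_multiple:
  assumes "u \<noteq> 0" "cross u x = 0"
  shows "\<exists>c. x = c *s u"
proof -
  have e: "u$2 * x$3 = u$3 * x$2" "u$3 * x$1 = u$1 * x$3" "u$1 * x$2 = u$2 * x$1"
    using assms(2) by (auto simp: vec3_eq_iff)
  have "u$1 \<noteq> 0 \<or> u$2 \<noteq> 0 \<or> u$3 \<noteq> 0" using assms(1) by (auto simp: vec3_eq_iff)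
  then show ?thesis
  proof (elim disjE)
    assume "u$1 \<noteq> 0" then show ?thesis
      using e by (intro exI[of _ "x$1 / u$1"]) (auto simp: vec3_eq_iff field_simps)
  next
    assume "u$2 \<noteq> 0" then show ?thesis
      using e by (intro exI[of _ "x$2 / u$2"]) (auto simp: vec3_eq_iff field_simps)
  next
    assume "u$3 \<noteq> 0" then show ?thesis
      using e by (intro exI[of _ "x$3 / u$3"]) (auto simp: vec3_eq_iff field_simps)
  qed
qed

lemma cramer3:
  "det3 a b c *s k = det3 k b c *s a + det3 a k c *s b + det3 a b k *s c"
  unfolding det3_eq_pair3_cross pair3_expand by (simp add: vec3_eq_iff algebra_simps)

text \<open>A nonzero vector has nonzero Hermitian norm, so it is not orthogonal to its conjugate.\<close>
lemma pair3_cnj_self_nonzero: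
  assumes "n \<noteq> 0"
  shows "pair3 (\<chi> i. cnj (n$i)) n \<noteq> 0"
proof -
  have "cnj z * z = of_real ((cmod z)\<^sup>2)" for z
    by (metis complex_norm_square mult.commute)
  then have "pair3 (\<chi> i. cnj (n$i)) n = of_real (\<Sum>i\<in>UNIV. (cmod (n$i))\<^sup>2)"
    by (simp add: pair3_def)
  moreover obtain i where "n$i \<noteq> 0" using assms by (auto simp: vec_eq_iff)
  then have "(\<Sum>i\<in>UNIV. (cmod (n$i))\<^sup>2) \<noteq> 0"
    by (subst sum_nonneg_eq_0_iff) auto
  ultimately show ?thesis by (metis of_real_eq_0_iff)
qed

lemma det3_eq_0_imp_span:
  assumes "cross a b \<noteq> 0" "det3 a b k = 0"
  shows "\<exists>s t. k = s *s a + t *s b"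
proof -
  define c where "c = (\<chi> i. cnj (cross a b $ i))"
  have D: "det3 a b c \<noteq> 0"
    unfolding det3_eq_pair3_cross c_def using pair3_cnj_self_nonzero[OF assms(1)] .
  have "det3 a b c *s k = det3 k b c *s a + det3 a k c *s b"
    using cramer3[of a b c k] assms(2) by simp
  then have "k = (det3 k b c / det3 a b c) *s a + (det3 a k c / det3 a b c) *s b"
    using D by (simp add: vec_eq_iff field_simps)
  then show ?thesis by blast
qed

lemma smult_nonzero: "c \<noteq> 0 \<Longrightarrow> (v::complex^3) \<noteq> 0 \<Longrightarrow> c *s v \<noteq> 0"
  by (auto simp: vec_eq_iff)

lemma cross_nonzero_indep:
  assumes "cross a b \<noteq> 0" "s *s a + t *s b = 0"
  shows "s = 0 \<and> t = 0"
proof -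
  have "cross (s *s a + t *s b) b = s *s cross a b" "cross a (s *s a + t *s b) = t *s cross a b"
    by (simp_all add: vec3_eq_iff algebra_simps)
  then show ?thesis using assms by (auto simp: vec3_eq_iff)
qed

lemma proj_pt_smult:
  assumes "c \<noteq> 0" shows "proj_pt (c *s v) = proj_pt v"
proof -
  have "(\<exists>d. x = d *s (c *s v) \<and> d \<noteq> 0) \<longleftrightarrow> (\<exists>d. x = d *s v \<and> d \<noteq> 0)" for x
  proof
    assume "\<exists>d. x = d *s (c *s v) \<and> d \<noteq> 0"
    then show "\<exists>d. x = d *s v \<and> d \<noteq> 0"
      using assms by (metis mult_eq_0_iff vector_smult_assoc)
  next
    assume "\<exists>d. x = d *s v \<and> d \<noteq> 0"
    then obtain d where "x = d *s v" "d \<noteq> 0" by blast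
    then show "\<exists>d. x = d *s (c *s v) \<and> d \<noteq> 0"
      using assms by (intro exI[of _ "d / c"]) (simp add: vector_smult_assoc)
  qed
  then show ?thesis unfolding proj_pt_def by blast
qed

lemma proj_pt_eq_iff_cross:
  assumes "u \<noteq> 0" "v \<noteq> 0"
  shows "proj_pt u = proj_pt v \<longleftrightarrow> cross u v = 0"
proof
  assume "proj_pt u = proj_pt v"
  moreover have "v \<in> proj_pt v" unfolding proj_pt_def by (intro CollectI exI[of _ 1]) simp
  ultimately obtain c where "v = c *s u" unfolding proj_pt_def by auto
  then show "cross u v = 0" using cross_smult[of 1 u c u] cross_self[of u] by simp
next
  assume "cross u v = 0"
  then obtain c where c: "v = c *s u" using cross_eq_0_imp_multiple assms by blast
  then have "c \<noteq> 0" using assms by auto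
  then show "proj_pt u = proj_pt v" using c proj_pt_smult by simp
qed

lemma on_line_proj_pt:
  assumes "x \<noteq> 0"
  shows "on_line a (proj_pt x) \<longleftrightarrow> pair3 a x = 0"
proof
  assume "on_line a (proj_pt x)"
  then obtain y where y: "y \<noteq> 0" "proj_pt x = proj_pt y" "pair3 a y = 0"
    unfolding on_line_def by auto
  then obtain c where "y = c *s x"
    using proj_pt_eq_iff_cross cross_eq_0_imp_multiple assms by metis
  then show "pair3 a x = 0" using y pair3_smult by auto
qed (use assms in \<open>auto simp: on_line_def\<close>)

lemma common_point_eq_cross:
  assumes "P \<in> line_pts a" "P \<in> line_pts b" "cross a b \<noteq> 0"
  shows "P = proj_pt (cross a b)"
proof -
  obtain x where x: "x \<noteq> 0" "P = proj_pt x" "pair3 a x = 0"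
    using assms(1) unfolding line_pts_def on_line_def by auto
  have "pair3 b x = 0" using assms(2) x on_line_proj_pt unfolding line_pts_def by auto
  then have "cross (cross a b) x = 0" using x cross_cross by simp
  then show ?thesis using proj_pt_eq_iff_cross assms(3) x by metis
qed

text \<open>A scalar function of z is polynomial on lines if its
  restriction to every complex affine line l \<mapsto> a + l (b - a) is a polynomial in l; this is
  all the algebraic geometry the connectedness argument needs.\<close>
definition affine_line :: "(complex^3)^'n \<Rightarrow> (complex^3)^'n \<Rightarrow> complex \<Rightarrow> (complex^3)^'n" where
  "affine_line a b l = (\<chi> i. \<chi> m. a$i$m + l * (b$i$m - a$i$m))"

definition poly_on_lines :: "((complex^3)^'n \<Rightarrow> complex) \<Rightarrow> bool" where
  "poly_on_lines g \<longleftrightarrow> (\<forall>a b. \<exists>p. \<forall>l. g (affine_line a b l) = poly p l)"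

definition vec_poly_on_lines :: "((complex^3)^'n \<Rightarrow> complex^3) \<Rightarrow> bool" where
  "vec_poly_on_lines F \<longleftrightarrow> (\<forall>m. poly_on_lines (\<lambda>z. F z $ m))"

lemma affine_line_0 [simp]: "affine_line a b 0 = a"
  and affine_line_1 [simp]: "affine_line a b 1 = b"
  by (simp_all add: affine_line_def vec_eq_iff)

lemma poly_on_lines_const: "poly_on_lines (\<lambda>z. c)"
  unfolding poly_on_lines_def by (auto intro: exI[of _ "[:c:]"])

lemma poly_on_lines_coord: "poly_on_lines (\<lambda>z::(complex^3)^'n. z$i$m)"
  unfolding poly_on_lines_def
proof (intro allI)
  fix a b :: "(complex^3)^'n"
  show "\<exists>p. \<forall>l. affine_line a b l $ i $ m = poly p l"
    by (rule exI[of _ "[:a$i$m, b$i$m - a$i$m:]"]) (simp add: affine_line_def algebra_simps)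
qed

lemma poly_on_lines_add: "poly_on_lines f \<Longrightarrow> poly_on_lines g \<Longrightarrow> poly_on_lines (\<lambda>z. f z + g z)"
  and poly_on_lines_diff: "poly_on_lines f \<Longrightarrow> poly_on_lines g \<Longrightarrow> poly_on_lines (\<lambda>z. f z - g z)"
  and poly_on_lines_mult: "poly_on_lines f \<Longrightarrow> poly_on_lines g \<Longrightarrow> poly_on_lines (\<lambda>z. f z * g z)"
  unfolding poly_on_lines_def by (metis poly_add, metis poly_diff, metis poly_mult)

lemmas poly_on_lines_intros =
  poly_on_lines_const poly_on_lines_coord poly_on_lines_add poly_on_lines_diff poly_on_lines_mult

lemma vec_poly_on_lines_coord: "vec_poly_on_lines (\<lambda>z. z$i)"
  unfolding vec_poly_on_lines_def by (simp add: poly_on_lines_coord)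

lemma vec_poly_on_lines_cross:
  "vec_poly_on_lines F \<Longrightarrow> vec_poly_on_lines G \<Longrightarrow> vec_poly_on_lines (\<lambda>z. cross (F z) (G z))"
  unfolding vec_poly_on_lines_def by (auto simp: forall_3 intro!: poly_on_lines_intros)

lemma vec_poly_on_lines_combination:
  "poly_on_lines s \<Longrightarrow> poly_on_lines t \<Longrightarrow> vec_poly_on_lines F \<Longrightarrow> vec_poly_on_lines G \<Longrightarrow>
   vec_poly_on_lines (\<lambda>z. s z *s F z + t z *s G z)"
  unfolding vec_poly_on_lines_def by (auto intro!: poly_on_lines_intros)

lemma poly_on_lines_det3:
  "vec_poly_on_lines F \<Longrightarrow> vec_poly_on_lines G \<Longrightarrow> vec_poly_on_lines K \<Longrightarrow>
   poly_on_lines (\<lambda>z. det3 (F z) (G z) (K z))"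
  unfolding det3_eq_pair3_cross pair3_expand using vec_poly_on_lines_cross[of F G]
  unfolding vec_poly_on_lines_def by (auto intro!: poly_on_lines_intros)

lemma poly_on_lines_finite_zeros:
  assumes "poly_on_lines g" "g z1 \<noteq> 0"
  shows "finite {l. g (affine_line z1 z2 l) = 0}"
proof -
  obtain p where p: "\<And>l. g (affine_line z1 z2 l) = poly p l"
    using assms(1) unfolding poly_on_lines_def by blast
  have "p \<noteq> 0" using p[of 0] assms(2) by auto
  then show ?thesis using poly_roots_finite p by simp
qed

lemma vec_poly_on_lines_finite_zeros:
  assumes "vec_poly_on_lines F" "F z1 \<noteq> 0"
  shows "finite {l. F (affine_line z1 z2 l) = 0}"
proof -
  obtain m where "F z1 $ m \<noteq> 0" using assms(2) by (auto simp: vec_eq_iff)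
  then have "finite {l. F (affine_line z1 z2 l) $ m = 0}"
    using poly_on_lines_finite_zeros assms(1) unfolding vec_poly_on_lines_def by blast
  then show ?thesis by (rule rev_finite_subset) auto
qed

lemma continuous_on_affine_line:
  assumes "\<And>i. vec_poly_on_lines (\<lambda>z. \<Phi> z $ i)"
  shows "continuous_on UNIV (\<lambda>l. \<Phi> (affine_line z1 z2 l))"
proof -
  have "continuous_on UNIV (\<lambda>l. \<Phi> (affine_line z1 z2 l) $ i $ m)" for i m
  proof -
    obtain p where "\<And>l. \<Phi> (affine_line z1 z2 l) $ i $ m = poly p l"
      using assms unfolding vec_poly_on_lines_def poly_on_lines_def by blast
    then show ?thesis by (simp add: continuous_intros)
  qed
  then have "continuous_on UNIV (\<lambda>l. \<chi> i. \<chi> m. \<Phi> (affine_line z1 z2 l) $ i $ m)"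
    by (intro continuous_on_vec_lambda)
  then show ?thesis by simp
qed

lemma openin_proj_tuple_topology:
  "openin proj_tuple_topology U \<longleftrightarrow> U \<subseteq> proj_tuple ` nonzero_tuples \<and>
      openin (top_of_set nonzero_tuples) {H \<in> nonzero_tuples. proj_tuple H \<in> U}"
  unfolding proj_tuple_topology_def topology_inverse'[OF istopology_proj_tuple] by simp

lemma topspace_proj_tuple_topology:
  "topspace (proj_tuple_topology :: ('n::finite \<Rightarrow> _) topology) =
     proj_tuple ` (nonzero_tuples :: ((complex^3)^'n) set)"
proof -
  have "{H \<in> (nonzero_tuples :: ((complex^3)^'n) set). proj_tuple H \<in> proj_tuple ` nonzero_tuples}
      = nonzero_tuples" by auto
  then have "openin proj_tuple_topology (proj_tuple ` (nonzero_tuples :: ((complex^3)^'n) set))"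
    unfolding openin_proj_tuple_topology by simp
  then show ?thesis
    using openin_proj_tuple_topology openin_subset openin_topspace by blast
qed

lemma continuous_map_proj_tuple:
  "continuous_map (top_of_set nonzero_tuples) proj_tuple_topology proj_tuple"
  unfolding continuous_map_def topspace_proj_tuple_topology
  using openin_proj_tuple_topology by auto

lemma path_connectedin_proj_tuple_image:
  assumes "path_connected S" "S \<subseteq> nonzero_tuples"
  shows "path_connectedin proj_tuple_topology (proj_tuple ` S)"
proof -
  have "path_connectedin (top_of_set nonzero_tuples) S"
    using assms by (simp add: path_connectedin_subtopology)
  then show ?thesis
    by (rule path_connectedin_continuous_map_image[OF continuous_map_proj_tuple])
qed

definition concurrent :: "(complex^3)^'n::finite \<Rightarrow> 'n \<Rightarrow> 'n \<Rightarrow> 'n \<Rightarrow> bool" where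
  "concurrent H x y k \<longleftrightarrow> line_pts (H$x) \<inter> line_pts (H$y) \<inter> line_pts (H$k) \<noteq> {}"

lemma concurrent_commute:
  "concurrent H x y k = concurrent H y k x" "concurrent H x y k = concurrent H y x k"
  unfolding concurrent_def by (simp_all add: Int_ac)

lemma concurrent_iff_Inter:
  "concurrent H x y k \<longleftrightarrow> \<Inter> ((\<lambda>i. line_pts (H$i)) ` {x, y, k}) \<noteq> {}"
  unfolding concurrent_def by (simp add: Int_ac)

lemma intersection_lattice_iff_concurrent:
  assumes "x \<noteq> y" "y \<noteq> k" "x \<noteq> k"
  shows "{x, y, k} \<in> intersection_lattice H \<longleftrightarrow> concurrent H x y k"
proof
  assume "{x, y, k} \<in> intersection_lattice H"
  then obtain i j l where e: "{x, y, k} = {i, j, l}" and c: "concurrent H i j l"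
    unfolding intersection_lattice_def concurrent_def by auto
  show "concurrent H x y k" using c unfolding concurrent_iff_Inter e .
next
  assume "concurrent H x y k"
  then show "{x, y, k} \<in> intersection_lattice H"
    using assms unfolding intersection_lattice_def concurrent_def by blast
qed

definition realizes :: "(complex^3)^'n::finite \<Rightarrow> (complex^3)^'n \<Rightarrow> bool" where
  "realizes H G \<longleftrightarrow> (\<forall>i. G$i \<noteq> 0) \<and> (\<forall>i j. i \<noteq> j \<longrightarrow> cross (G$i) (G$j) \<noteq> 0) \<and>
     (\<forall>i j k. i \<noteq> j \<and> j \<noteq> k \<and> i \<noteq> k \<longrightarrow> (det3 (G$i) (G$j) (G$k) = 0 \<longleftrightarrow> concurrent H i j k))"

lemma realization_space_eq_realizes:
  fixes H :: "(complex^3)^'n::finite"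
  shows "realization_space (intersection_lattice H) = proj_tuple ` {G. realizes H G}"
proof -
  have distinct: "(\<forall>i j. i \<noteq> j \<longrightarrow> proj_pt (G$i) \<noteq> proj_pt (G$j)) \<longleftrightarrow>
      (\<forall>i j. i \<noteq> j \<longrightarrow> cross (G$i) (G$j) \<noteq> 0)" if "\<forall>i. G$i \<noteq> 0" for G :: "(complex^3)^'n"
    using proj_pt_eq_iff_cross that by blast
  have dets: "(\<forall>i j k. i \<noteq> j \<and> j \<noteq> k \<and> i \<noteq> k \<longrightarrow>
          (det3 (G$i) (G$j) (G$k) = 0 \<longleftrightarrow> {i, j, k} \<in> intersection_lattice H)) \<longleftrightarrow>
      (\<forall>i j k. i \<noteq> j \<and> j \<noteq> k \<and> i \<noteq> k \<longrightarrow>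
          (det3 (G$i) (G$j) (G$k) = 0 \<longleftrightarrow> concurrent H i j k))" for G :: "(complex^3)^'n"
    by (intro all_cong1 imp_cong refl) (simp add: intersection_lattice_iff_concurrent)
  have key: "G \<in> nonzero_tuples \<and> (\<forall>i j. i \<noteq> j \<longrightarrow> proj_pt (G$i) \<noteq> proj_pt (G$j)) \<and>
      (\<forall>i j k. i \<noteq> j \<and> j \<noteq> k \<and> i \<noteq> k \<longrightarrow>
          (det3 (G$i) (G$j) (G$k) = 0 \<longleftrightarrow> {i, j, k} \<in> intersection_lattice H))
      \<longleftrightarrow> realizes H G" for G
  proof (cases "\<forall>i. G$i \<noteq> 0")
    case True
    then show ?thesis unfolding realizes_def nonzero_tuples_def dets distinct[OF True] by simp
  next
    case False
    then show ?thesis unfolding realizes_def nonzero_tuples_def by blast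
  qed
  show ?thesis unfolding realization_space_def key by blast
qed

lemma realizes_nonzero: "realizes H G \<Longrightarrow> G$i \<noteq> 0"
  and realizes_cross: "realizes H G \<Longrightarrow> i \<noteq> j \<Longrightarrow> cross (G$i) (G$j) \<noteq> 0"
  and realizes_det3_iff: "realizes H G \<Longrightarrow> i \<noteq> j \<Longrightarrow> j \<noteq> k \<Longrightarrow> i \<noteq> k \<Longrightarrow>
     det3 (G$i) (G$j) (G$k) = 0 \<longleftrightarrow> concurrent H i j k"
  by (simp_all add: realizes_def)

lemma realizes_rescale:
  assumes "realizes H G" "\<And>i. c i \<noteq> 0"
  shows "realizes H (\<chi> i. c i *s G$i)"
  using assms unfolding realizes_def by (simp add: smult_nonzero cross_smult det3_smult)

lemma proj_tuple_rescale:
  assumes "\<And>i. c i \<noteq> 0"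
  shows "proj_tuple (\<chi> i. c i *s G$i) = proj_tuple G"
  using assms by (simp add: proj_tuple_def proj_pt_smult)

lemma line_arrangement_cross: "line_arrangement H \<Longrightarrow> i \<noteq> j \<Longrightarrow> cross (H$i) (H$j) \<noteq> 0"
  using proj_pt_eq_iff_cross unfolding line_arrangement_def by blast

lemma concurrent_through_point:
  assumes "line_arrangement H" "realizes H G" "c \<noteq> d"
    "Q \<in> line_pts (H$c)" "Q \<in> line_pts (H$d)" "det3 (G$c) (G$d) (G$a) = 0"
  shows "Q \<in> line_pts (H$a)"
proof (cases "a = c \<or> a = d")
  case False
  then have "concurrent H c d a" using realizes_det3_iff[OF assms(2,3)] assms(6) by metis
  then obtain R where R: "R \<in> line_pts (H$c)" "R \<in> line_pts (H$d)" "R \<in> line_pts (H$a)"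
    unfolding concurrent_def by blast
  have "R = Q" using common_point_eq_cross R assms(4,5) line_arrangement_cross[OF assms(1,3)] by metis
  then show ?thesis using R by simp
qed (use assms in blast)

lemma two_distinct_elements: "2 \<le> card X \<Longrightarrow> \<exists>a b. a \<in> X \<and> b \<in> X \<and> a \<noteq> b"
  by (metis card_le_Suc_iff numeral_2_eq_2 insert_iff)

lemma multiple_point_two_lines:
  assumes "P \<in> mult_pts H (insert j T)" "j \<notin> T"
  shows "\<exists>a\<in>T. \<exists>b\<in>T. a \<noteq> b \<and> P \<in> line_pts (H$a) \<and> P \<in> line_pts (H$b)"
proof -
  let ?A = "{i \<in> insert j T. on_line (H$i) P}"
  have P: "P \<in> P2" and "3 \<le> card ?A" using assms(1) unfolding mult_pts_def by auto
  then have "2 \<le> card (?A - {j})" by (auto simp: card_Diff_singleton_if)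
  then obtain a b where "a \<in> ?A - {j}" "b \<in> ?A - {j}" "a \<noteq> b"
    using two_distinct_elements by blast
  then show ?thesis using P unfolding line_pts_def by auto
qed

text \<open>Hence a line meets only finitely many multiple points: each is its intersection
  with an earlier line.\<close>
lemma finite_multiple_points_on_line:
  assumes "line_arrangement H" "j \<notin> T"
  shows "finite (mult_pts H (insert j T) \<inter> line_pts (H$j))"
proof -
  have "mult_pts H (insert j T) \<inter> line_pts (H$j) \<subseteq> (\<lambda>i. proj_pt (cross (H$i) (H$j))) ` T"
  proof
    fix P assume P: "P \<in> mult_pts H (insert j T) \<inter> line_pts (H$j)"
    then obtain a where a: "a \<in> T" "P \<in> line_pts (H$a)"
      using multiple_point_two_lines assms(2) by blast
    then have "cross (H$a) (H$j) \<noteq> 0"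
      using assms line_arrangement_cross by metis
    then show "P \<in> (\<lambda>i. proj_pt (cross (H$i) (H$j))) ` T"
      using common_point_eq_cross a P by blast
  qed
  then show ?thesis by (rule finite_subset) simp
qed

definition parametrizes ::
  "(complex^3)^'n::finite \<Rightarrow> ((complex^3)^'n \<Rightarrow> (complex^3)^'n) \<Rightarrow> 'n set \<Rightarrow> bool" where
  "parametrizes H \<Phi> S \<longleftrightarrow>
     (\<forall>i\<in>S. vec_poly_on_lines (\<lambda>z. \<Phi> z $ i)) \<and>
     (\<forall>z. \<forall>x\<in>S. \<forall>y\<in>S. \<forall>k\<in>S. x \<noteq> y \<longrightarrow> y \<noteq> k \<longrightarrow> x \<noteq> k \<longrightarrow> concurrent H x y k \<longrightarrow>
        det3 (\<Phi> z $ x) (\<Phi> z $ y) (\<Phi> z $ k) = 0) \<and>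
     (\<forall>G. realizes H G \<longrightarrow> (\<exists>z. \<forall>i\<in>S. \<exists>c. c \<noteq> 0 \<and> \<Phi> z $ i = c *s G$i)) \<and>
     (\<forall>z z'. (\<forall>i\<in>S. z$i = z'$i) \<longrightarrow> (\<forall>i\<in>S. \<Phi> z $ i = \<Phi> z' $ i))"

lemma
  assumes "parametrizes H \<Phi> S"
  shows parametrizes_poly: "i \<in> S \<Longrightarrow> vec_poly_on_lines (\<lambda>z. \<Phi> z $ i)"
    and parametrizes_concurrent: "x \<in> S \<Longrightarrow> y \<in> S \<Longrightarrow> k \<in> S \<Longrightarrow> x \<noteq> y \<Longrightarrow> y \<noteq> k \<Longrightarrow> x \<noteq> k \<Longrightarrow>
      concurrent H x y k \<Longrightarrow> det3 (\<Phi> z $ x) (\<Phi> z $ y) (\<Phi> z $ k) = 0"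
    and parametrizes_covers: "realizes H G \<Longrightarrow> \<exists>z. \<forall>i\<in>S. \<exists>c. c \<noteq> 0 \<and> \<Phi> z $ i = c *s G$i"
    and parametrizes_local: "\<forall>i\<in>S. z$i = z'$i \<Longrightarrow> a \<in> S \<Longrightarrow> \<Phi> z $ a = \<Phi> z' $ a"
  using assms by (simp_all add: parametrizes_def)

lemma parametrizes_empty: "parametrizes H (\<lambda>z. z) {}"
  unfolding parametrizes_def by simp

definition update_entry :: "(complex^3)^'n \<Rightarrow> 'n \<Rightarrow> complex^3 \<Rightarrow> (complex^3)^'n" where
  "update_entry z j w = (\<chi> i. if i = j then w else z$i)"

lemma update_entry_nth [simp]: "update_entry z j w $ i = (if i = j then w else z$i)"
  unfolding update_entry_def by simp

lemma parametrizes_insert: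
  fixes H :: "(complex^3)^'n::finite"
  assumes param: "parametrizes H \<Psi> T" and jT: "j \<notin> T"
    and poly: "vec_poly_on_lines NEW"
    and local: "\<And>z z'. \<forall>i\<in>insert j T. z$i = z'$i \<Longrightarrow> NEW z = NEW z'"
    and pencil: "\<And>P. P \<in> mult_pts H (insert j T) \<inter> line_pts (H$j) \<Longrightarrow>
       \<exists>a\<in>T. \<exists>b\<in>T. a \<noteq> b \<and> P \<in> line_pts (H$a) \<and> P \<in> line_pts (H$b) \<and>
          (\<forall>z. \<exists>s t. NEW z = s *s \<Psi> z $ a + t *s \<Psi> z $ b)"
    and covers: "\<And>G z. realizes H G \<Longrightarrow> \<forall>i\<in>T. \<exists>c. c \<noteq> 0 \<and> \<Psi> z $ i = c *s G$i \<Longrightarrow>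
       \<exists>w c. c \<noteq> 0 \<and> NEW (update_entry z j w) = c *s G$j"
  shows "parametrizes H (\<lambda>z. \<chi> i. if i = j then NEW z else \<Psi> z $ i) (insert j T)"
proof -
  define \<Phi> where "\<Phi> = (\<lambda>z. \<chi> i. if i = j then NEW z else \<Psi> z $ i)"
  have \<Phi>_j: "\<Phi> z $ j = NEW z" and \<Phi>_T: "i \<in> T \<Longrightarrow> \<Phi> z $ i = \<Psi> z $ i" for z i
    unfolding \<Phi>_def using jT by auto
  text \<open>The key point: a concurrence x, y, j with x, y \<in> T is witnessed by a multiple point
    of the new line, and NEW z lies in a pencil of lines through it.\<close>
  have new_concurrent: "det3 (\<Psi> z $ x) (\<Psi> z $ y) (NEW z) = 0"
    if xy: "x \<in> T" "y \<in> T" "x \<noteq> y" and c: "concurrent H x y j" for z x y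
  proof -
    obtain P where P: "P \<in> line_pts (H$x)" "P \<in> line_pts (H$y)" "P \<in> line_pts (H$j)"
      using c unfolding concurrent_def by blast
    have "3 \<le> card {i \<in> insert j T. on_line (H$i) P}"
    proof -
      have "{x, y, j} \<subseteq> {i \<in> insert j T. on_line (H$i) P}"
        using P xy unfolding line_pts_def by auto
      moreover have "card {x, y, j} = 3" using xy jT by (auto simp: card_insert_if)
      ultimately show ?thesis by (metis card_mono finite)
    qed
    then have "P \<in> mult_pts H (insert j T) \<inter> line_pts (H$j)"
      using P(3) unfolding mult_pts_def line_pts_def by blast
    then obtain a b s t where ab: "a \<in> T" "b \<in> T" "P \<in> line_pts (H$a)" "P \<in> line_pts (H$b)"
      and st: "NEW z = s *s \<Psi> z $ a + t *s \<Psi> z $ b"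
      using pencil by blast
    have "det3 (\<Psi> z $ x) (\<Psi> z $ y) (\<Psi> z $ e) = 0" if "e \<in> T" "P \<in> line_pts (H$e)" for e
    proof (cases "e = x \<or> e = y")
      case False
      then have "concurrent H x y e" using P that unfolding concurrent_def by blast
      then show ?thesis using False xy that parametrizes_concurrent[OF param] by blast
    qed (auto simp: det3_repeated)
    then show ?thesis unfolding st det3_linear using ab by simp
  qed
  show ?thesis
    unfolding parametrizes_def \<Phi>_def[symmetric]
  proof (intro conjI ballI allI impI)
    fix i assume "i \<in> insert j T"
    then show "vec_poly_on_lines (\<lambda>z. \<Phi> z $ i)"
      using poly parametrizes_poly[OF param] \<Phi>_j \<Phi>_T by (auto simp del: vec_lambda_beta)
  next
    fix z x y k assume xyk: "x \<in> insert j T" "y \<in> insert j T" "k \<in> insert j T"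
      "x \<noteq> y" "y \<noteq> k" "x \<noteq> k" "concurrent H x y k"
    consider "x \<in> T" "y \<in> T" "k \<in> T" | "k = j" | "x = j" | "y = j" using xyk by blast
    then show "det3 (\<Phi> z $ x) (\<Phi> z $ y) (\<Phi> z $ k) = 0"
    proof cases
      case 1 then show ?thesis using xyk parametrizes_concurrent[OF param] \<Phi>_T by simp
    next
      case 2 then show ?thesis using xyk new_concurrent \<Phi>_T \<Phi>_j by simp
    next
      case 3
      then have "concurrent H y k j" using xyk concurrent_commute by metis
      then show ?thesis using 3 xyk new_concurrent \<Phi>_T \<Phi>_j det3_cycle by (metis insertE)
    next
      case 4
      then have "concurrent H k x j" using xyk concurrent_commute by metis
      then show ?thesis using 4 xyk new_concurrent \<Phi>_T \<Phi>_j det3_cycle by (metis insertE)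
    qed
  next
    fix G assume G: "realizes H G"
    obtain z where z: "\<forall>i\<in>T. \<exists>c. c \<noteq> 0 \<and> \<Psi> z $ i = c *s G$i"
      using parametrizes_covers[OF param G] by blast
    obtain w c where wc: "c \<noteq> 0" "NEW (update_entry z j w) = c *s G$j"
      using covers[OF G z] by blast
    have "\<Psi> (update_entry z j w) $ i = \<Psi> z $ i" if "i \<in> T" for i
      using parametrizes_local[OF param _ that] jT by auto
    then show "\<exists>z. \<forall>i\<in>insert j T. \<exists>c. c \<noteq> 0 \<and> \<Phi> z $ i = c *s G$i"
      using z wc \<Phi>_T \<Phi>_j by (intro exI[of _ "update_entry z j w"]) auto
  next
    fix z z' :: "(complex^3)^'n" and i assume agree: "\<forall>i\<in>insert j T. z$i = z'$i" and i: "i \<in> insert j T"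
    then show "\<Phi> z $ i = \<Phi> z' $ i"
      using local[OF agree] parametrizes_local[OF param, of z z'] \<Phi>_T \<Phi>_j by auto
  qed
qed

lemma extend_no_multiple_point:
  fixes H :: "(complex^3)^'n::finite"
  assumes param: "parametrizes H \<Psi> T" and jT: "j \<notin> T"
    and M: "mult_pts H (insert j T) \<inter> line_pts (H$j) = {}"
  shows "\<exists>\<Phi>. parametrizes H \<Phi> (insert j T)"
proof (rule exI, rule parametrizes_insert[OF param jT, of "\<lambda>z. z$j"])
  fix G z assume "realizes H G"
  show "\<exists>w c. c \<noteq> 0 \<and> update_entry z j w $ j = c *s G$j"
    by (intro exI[of _ "G$j"] exI[of _ 1]) simp
qed (use M in \<open>auto simp: vec_poly_on_lines_coord\<close>)

lemma extend_one_multiple_point: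
  fixes H :: "(complex^3)^'n::finite"
  assumes param: "parametrizes H \<Psi> T" and jT: "j \<notin> T"
    and M: "mult_pts H (insert j T) \<inter> line_pts (H$j) = {P}"
  shows "\<exists>\<Phi>. parametrizes H \<Phi> (insert j T)"
proof -
  have P: "P \<in> mult_pts H (insert j T)" "P \<in> line_pts (H$j)" using M by auto
  obtain a b where ab: "a \<in> T" "b \<in> T" "a \<noteq> b" "P \<in> line_pts (H$a)" "P \<in> line_pts (H$b)"
    using multiple_point_two_lines[OF P(1) jT] by blast
  define NEW where "NEW z = (z$j$1) *s \<Psi> z $ a + (z$j$2) *s \<Psi> z $ b" for z
  show ?thesis
  proof (rule exI, rule parametrizes_insert[OF param jT, of NEW])
    show "vec_poly_on_lines NEW" unfolding NEW_def
      by (intro vec_poly_on_lines_combination poly_on_lines_coord parametrizes_poly[OF param] ab)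
  next
    fix z z' :: "(complex^3)^'n" assume agree: "\<forall>i\<in>insert j T. z$i = z'$i"
    then have onT: "\<forall>i\<in>T. z$i = z'$i" by blast
    show "NEW z = NEW z'"
      unfolding NEW_def using agree parametrizes_local[OF param onT] ab by simp
  next
    fix P' assume "P' \<in> mult_pts H (insert j T) \<inter> line_pts (H$j)"
    then have "P' = P" using M by simp
    moreover have "\<forall>z. \<exists>s t. NEW z = s *s \<Psi> z $ a + t *s \<Psi> z $ b"
      unfolding NEW_def by blast
    ultimately show "\<exists>a\<in>T. \<exists>b\<in>T. a \<noteq> b \<and> P' \<in> line_pts (H$a) \<and> P' \<in> line_pts (H$b) \<and>
        (\<forall>z. \<exists>s t. NEW z = s *s \<Psi> z $ a + t *s \<Psi> z $ b)"
      using ab by blast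
  next
    fix G z assume G: "realizes H G" and z: "\<forall>i\<in>T. \<exists>c. c \<noteq> 0 \<and> \<Psi> z $ i = c *s G$i"
    obtain ca cb where c: "ca \<noteq> 0" "\<Psi> z $ a = ca *s G$a" "cb \<noteq> 0" "\<Psi> z $ b = cb *s G$b"
      using z ab by blast
    have "a \<noteq> j" "b \<noteq> j" using ab jT by auto
    moreover have "concurrent H a b j" unfolding concurrent_def using ab P by blast
    ultimately have "det3 (G$a) (G$b) (G$j) = 0" using realizes_det3_iff[OF G ab(3)] by blast
    then obtain s t where st: "G$j = s *s G$a + t *s G$b"
      using det3_eq_0_imp_span realizes_cross[OF G ab(3)] by blast
    have "\<Psi> (update_entry z j w) $ i = \<Psi> z $ i" if "i \<in> T" for i w
      using parametrizes_local[OF param _ that] jT by auto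
    then have "NEW (update_entry z j (vector [s / ca, t / cb, 0])) = G$j"
      unfolding NEW_def using c st ab by (simp add: vector_smult_assoc)
    then show "\<exists>w c. c \<noteq> 0 \<and> NEW (update_entry z j w) = c *s G$j"
      by (intro exI[of _ "vector [s / ca, t / cb, 0]"] exI[of _ 1]) simp
  qed
qed

text \<open>Two multiple points P (on lines a, b of T) and Q (on lines c, d of T): the new line is
  forced to be the line joining them, whose vector is the cross product of the two points.\<close>
lemma extend_two_multiple_points:
  fixes H :: "(complex^3)^'n::finite"
  assumes arr: "line_arrangement H" and param: "parametrizes H \<Psi> T" and jT: "j \<notin> T"
    and M: "mult_pts H (insert j T) \<inter> line_pts (H$j) = {P, Q}" and PQ: "P \<noteq> Q"
  shows "\<exists>\<Phi>. parametrizes H \<Phi> (insert j T)"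
proof -
  have PQ_mult: "P \<in> mult_pts H (insert j T)" "Q \<in> mult_pts H (insert j T)"
    and PQj: "P \<in> line_pts (H$j)" "Q \<in> line_pts (H$j)" using M by auto
  obtain a b where ab: "a \<in> T" "b \<in> T" "a \<noteq> b" "P \<in> line_pts (H$a)" "P \<in> line_pts (H$b)"
    using multiple_point_two_lines[OF PQ_mult(1) jT] by blast
  obtain c d where cd: "c \<in> T" "d \<in> T" "c \<noteq> d" "Q \<in> line_pts (H$c)" "Q \<in> line_pts (H$d)"
    using multiple_point_two_lines[OF PQ_mult(2) jT] by blast
  define NEW where "NEW z = cross (cross (\<Psi> z $ a) (\<Psi> z $ b)) (cross (\<Psi> z $ c) (\<Psi> z $ d))" for z
  have NEW_ab: "NEW z = (- det3 (\<Psi> z $ c) (\<Psi> z $ d) (\<Psi> z $ b)) *s \<Psi> z $ a +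
      det3 (\<Psi> z $ c) (\<Psi> z $ d) (\<Psi> z $ a) *s \<Psi> z $ b" for z
    unfolding NEW_def cross_cross_cross by (simp add: vec_eq_iff algebra_simps)
  have NEW_cd: "NEW z = det3 (\<Psi> z $ a) (\<Psi> z $ b) (\<Psi> z $ d) *s \<Psi> z $ c +
      (- det3 (\<Psi> z $ a) (\<Psi> z $ b) (\<Psi> z $ c)) *s \<Psi> z $ d" for z
  proof -
    have "NEW z = - cross (cross (\<Psi> z $ c) (\<Psi> z $ d)) (cross (\<Psi> z $ a) (\<Psi> z $ b))"
      unfolding NEW_def by (rule cross_antisym)
    then show ?thesis unfolding cross_cross_cross by (simp add: vec_eq_iff algebra_simps)
  qed
  show ?thesis
  proof (rule exI, rule parametrizes_insert[OF param jT, of NEW])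
    show "vec_poly_on_lines NEW" unfolding NEW_def
      by (intro vec_poly_on_lines_cross parametrizes_poly[OF param] ab cd)
  next
    fix z z' :: "(complex^3)^'n" assume agree: "\<forall>i\<in>insert j T. z$i = z'$i"
    then have onT: "\<forall>i\<in>T. z$i = z'$i" by blast
    show "NEW z = NEW z'"
      unfolding NEW_def using parametrizes_local[OF param onT] ab cd by simp
  next
    fix P' assume "P' \<in> mult_pts H (insert j T) \<inter> line_pts (H$j)"
    then consider "P' = P" | "P' = Q" using M by auto
    then show "\<exists>a\<in>T. \<exists>b\<in>T. a \<noteq> b \<and> P' \<in> line_pts (H$a) \<and> P' \<in> line_pts (H$b) \<and>
        (\<forall>z. \<exists>s t. NEW z = s *s \<Psi> z $ a + t *s \<Psi> z $ b)"
    proof cases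
      case 1
      have "\<forall>z. \<exists>s t. NEW z = s *s \<Psi> z $ a + t *s \<Psi> z $ b" using NEW_ab by blast
      then show ?thesis using 1 ab by blast
    next
      case 2
      have "\<forall>z. \<exists>s t. NEW z = s *s \<Psi> z $ c + t *s \<Psi> z $ d" using NEW_cd by blast
      then show ?thesis using 2 cd by blast
    qed
  next
    fix G z assume G: "realizes H G" and z: "\<forall>i\<in>T. \<exists>c. c \<noteq> 0 \<and> \<Psi> z $ i = c *s G$i"
    obtain ka kb kc kd where k: "ka \<noteq> 0" "\<Psi> z $ a = ka *s G$a" "kb \<noteq> 0" "\<Psi> z $ b = kb *s G$b"
      "kc \<noteq> 0" "\<Psi> z $ c = kc *s G$c" "kd \<noteq> 0" "\<Psi> z $ d = kd *s G$d"
      using z ab cd by meson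
    define X where "X = cross (cross (G$a) (G$b)) (cross (G$c) (G$d))"
    have NEW_X: "NEW (update_entry z j w) = (ka * kb * (kc * kd)) *s X" for w
    proof -
      have "\<Psi> (update_entry z j w) $ i = \<Psi> z $ i" if "i \<in> T" for i
        using parametrizes_local[OF param _ that] jT by auto
      then show ?thesis
        unfolding NEW_def X_def using ab cd k by (simp add: cross_smult vector_smult_assoc)
    qed
    text \<open>X is nonzero: otherwise G_a and G_b would both be dependent on G_c, G_d, so lines a
      and b of H would pass through Q, forcing Q = P.\<close>
    have "X \<noteq> 0"
    proof
      assume "X = 0"
      then have "(- det3 (G$c) (G$d) (G$b)) *s G$a + det3 (G$c) (G$d) (G$a) *s G$b = 0"
        unfolding X_def cross_cross_cross by (simp add: vec_eq_iff algebra_simps)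
      then have "- det3 (G$c) (G$d) (G$b) = 0 \<and> det3 (G$c) (G$d) (G$a) = 0"
        by (rule cross_nonzero_indep[OF realizes_cross[OF G ab(3)]])
      then have "det3 (G$c) (G$d) (G$b) = 0" "det3 (G$c) (G$d) (G$a) = 0" by auto
      then have "Q \<in> line_pts (H$a)" "Q \<in> line_pts (H$b)"
        using concurrent_through_point[OF arr G cd(3-5)] by blast+
      then have "Q = P"
        using common_point_eq_cross ab line_arrangement_cross[OF arr ab(3)] by metis
      then show False using PQ by simp
    qed
    text \<open>G_j is orthogonal to both G_a \<times> G_b and G_c \<times> G_d, hence proportional to X.\<close>
    have "concurrent H a b j" "concurrent H c d j"
      unfolding concurrent_def using ab cd PQj by blast+
    moreover have "a \<noteq> j" "b \<noteq> j" "c \<noteq> j" "d \<noteq> j" using ab cd jT by auto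
    ultimately have "det3 (G$a) (G$b) (G$j) = 0" "det3 (G$c) (G$d) (G$j) = 0"
      using realizes_det3_iff[OF G ab(3)] realizes_det3_iff[OF G cd(3)] by blast+
    then have "pair3 (cross (G$a) (G$b)) (G$j) = 0" "pair3 (cross (G$c) (G$d)) (G$j) = 0"
      by (simp_all add: det3_eq_pair3_cross pair3_commute)
    then have "cross X (G$j) = 0"
      unfolding X_def by (simp add: cross_cross[of "cross (G$a) (G$b)"])
    then obtain \<mu> where \<mu>: "G$j = \<mu> *s X" using cross_eq_0_imp_multiple[OF \<open>X \<noteq> 0\<close>] by blast
    then have "\<mu> \<noteq> 0" using realizes_nonzero[OF G, of j] by auto
    then show "\<exists>w c. c \<noteq> 0 \<and> NEW (update_entry z j w) = c *s G$j"
      using k NEW_X \<mu>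
      by (intro exI[of _ 0] exI[of _ "ka * kb * (kc * kd) / \<mu>"]) (simp add: vector_smult_assoc)
  qed
qed

lemma parametrizes_insert_line:
  fixes H :: "(complex^3)^'n::finite"
  assumes arr: "line_arrangement H" and param: "parametrizes H \<Psi> T" and jT: "j \<notin> T"
    and few: "card (mult_pts H (insert j T) \<inter> line_pts (H$j)) < 3"
  shows "\<exists>\<Phi>. parametrizes H \<Phi> (insert j T)"
proof -
  let ?M = "mult_pts H (insert j T) \<inter> line_pts (H$j)"
  have "finite ?M" using finite_multiple_points_on_line[OF arr jT] .
  moreover have "card ?M = 0 \<or> card ?M = 1 \<or> card ?M = 2" using few by arith
  ultimately consider "?M = {}" | P where "?M = {P}" | P Q where "P \<noteq> Q" "?M = {P, Q}"
    by (auto simp: card_1_singleton_iff card_2_iff)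
  then show ?thesis
    using extend_no_multiple_point[OF param jT] extend_one_multiple_point[OF param jT]
      extend_two_multiple_points[OF arr param jT] by cases blast+
qed

text \<open>If every nonempty subarrangement has a line with at most two multiple points, lines can
  be peeled off one at a time; reversing this, every subarrangement has a parametrization.\<close>
lemma parametrization_exists:
  fixes H :: "(complex^3)^'n::finite"
  assumes arr: "line_arrangement H"
    and peel: "\<And>S. S \<noteq> {} \<Longrightarrow> \<exists>j\<in>S. card (mult_pts H S \<inter> line_pts (H$j)) < 3"
  shows "\<exists>\<Phi>. parametrizes H \<Phi> S"
proof (induction "card S" arbitrary: S rule: less_induct)
  case less
  show ?case
  proof (cases "S = {}")
    case True
    then show ?thesis using parametrizes_empty by blast
  next
    case False
    then obtain j where j: "j \<in> S" "card (mult_pts H S \<inter> line_pts (H$j)) < 3"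
      using peel by blast
    then have S: "S = insert j (S - {j})" by blast
    have "card (S - {j}) < card S" by (rule card_Diff1_less[OF finite j(1)])
    then obtain \<Psi> where "parametrizes H \<Psi> (S - {j})" using less by blast
    then show ?thesis
      using parametrizes_insert_line[OF arr, of \<Psi> "S - {j}" j] j S by auto
  qed
qed

text \<open>For a parametrization \<Phi> of all of H, the parameters z for which \<Phi> z realizes H are
  cofinite on every complex line through one of them: away from it, some polynomial
  condition (a vector, a cross product or a determinant) not vanishing at z1 vanishes.\<close>
lemma finite_nonrealizing_on_line:
  fixes \<Phi> :: "(complex^3)^'n::finite \<Rightarrow> (complex^3)^'n"
  assumes poly: "\<And>i. vec_poly_on_lines (\<lambda>z. \<Phi> z $ i)"
    and concurrent: "\<And>z x y k. x \<noteq> y \<Longrightarrow> y \<noteq> k \<Longrightarrow> x \<noteq> k \<Longrightarrow> concurrent H x y k \<Longrightarrow>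
        det3 (\<Phi> z $ x) (\<Phi> z $ y) (\<Phi> z $ k) = 0"
    and z1: "realizes H (\<Phi> z1)"
  shows "finite {l. \<not> realizes H (\<Phi> (affine_line z1 z2 l))}"
proof -
  let ?F = "\<lambda>l. \<Phi> (affine_line z1 z2 l)"
  define NC where "NC = {(i, j, k). i \<noteq> j \<and> j \<noteq> k \<and> i \<noteq> k \<and> \<not> concurrent H i j k}"
  have zero: "finite {l. ?F l $ i = 0}" for i
    by (rule vec_poly_on_lines_finite_zeros[OF poly realizes_nonzero[OF z1]])
  have cross: "finite {l. cross (?F l $ i) (?F l $ j) = 0}" if "i \<noteq> j" for i j
    by (rule vec_poly_on_lines_finite_zeros[OF vec_poly_on_lines_cross[OF poly poly]
          realizes_cross[OF z1 that]])
  have det: "finite {l. det3 (?F l $ i) (?F l $ j) (?F l $ k) = 0}" if "(i, j, k) \<in> NC" for i j k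
  proof -
    have "det3 (\<Phi> z1 $ i) (\<Phi> z1 $ j) (\<Phi> z1 $ k) \<noteq> 0"
      using that realizes_det3_iff[OF z1, of i j k] unfolding NC_def by auto
    then show ?thesis
      by (rule poly_on_lines_finite_zeros[OF poly_on_lines_det3[OF poly poly poly]])
  qed
  have "{l. \<not> realizes H (?F l)} \<subseteq> (\<Union>i. {l. ?F l $ i = 0}) \<union>
      (\<Union>(i, j)\<in>{(i, j). i \<noteq> j}. {l. cross (?F l $ i) (?F l $ j) = 0}) \<union>
      (\<Union>(i, j, k)\<in>NC. {l. det3 (?F l $ i) (?F l $ j) (?F l $ k) = 0})" (is "_ \<subseteq> ?Bad")
  proof
    fix l assume "l \<in> {l. \<not> realizes H (?F l)}"
    then consider i where "?F l $ i = 0" | i j where "i \<noteq> j" "cross (?F l $ i) (?F l $ j) = 0"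
      | i j k where "i \<noteq> j" "j \<noteq> k" "i \<noteq> k" "det3 (?F l $ i) (?F l $ j) (?F l $ k) = 0"
          "\<not> concurrent H i j k"
      using concurrent unfolding realizes_def by blast
    then show "l \<in> ?Bad"
    proof cases
      case (3 i j k)
      then have "(i, j, k) \<in> NC" unfolding NC_def by simp
      then show ?thesis using 3(4) by blast
    qed blast+
  qed
  moreover have "finite ?Bad"
    using zero cross det by (intro finite_UnI finite_UN_I) auto
  ultimately show ?thesis by (rule finite_subset)
qed

text \<open>The image of a parameter set that is cofinite on every complex line through two of its
  points is path-connected: two parameters are joined inside the complement of finitely
  many points of C, which is path-connected.\<close>
lemma path_connected_image_cofinite_on_lines:
  fixes \<Phi> :: "(complex^3)^'n::finite \<Rightarrow> (complex^3)^'n"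
  assumes poly: "\<And>i. vec_poly_on_lines (\<lambda>z. \<Phi> z $ i)"
    and cofinite: "\<And>z1 z2. z1 \<in> U \<Longrightarrow> z2 \<in> U \<Longrightarrow> finite {l. affine_line z1 z2 l \<notin> U}"
  shows "path_connected (\<Phi> ` U)"
  unfolding path_connected_component
proof (intro ballI)
  fix x y assume "x \<in> \<Phi> ` U" "y \<in> \<Phi> ` U"
  then obtain z1 z2 where z: "z1 \<in> U" "z2 \<in> U" "x = \<Phi> z1" "y = \<Phi> z2" by blast
  define C where "C = - {l. affine_line z1 z2 l \<notin> U}"
  let ?f = "\<lambda>l. \<Phi> (affine_line z1 z2 l)"
  have "path_connected C"
    unfolding C_def using cofinite[OF z(1,2)]
    by (intro path_connected_complement_countable) (simp_all add: countable_finite)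
  then have "path_connected (?f ` C)"
    using continuous_on_subset[OF continuous_on_affine_line[OF poly]]
    by (intro path_connected_continuous_image) auto
  moreover have "x \<in> ?f ` C" "y \<in> ?f ` C"
  proof -
    have "0 \<in> C" "1 \<in> C" "?f 0 = x" "?f 1 = y" using z unfolding C_def by simp_all
    then show "x \<in> ?f ` C" "y \<in> ?f ` C" by (metis image_eqI)+
  qed
  moreover have "?f ` C \<subseteq> \<Phi> ` U" unfolding C_def by auto
  ultimately show "path_component (\<Phi> ` U) x y"
    by (meson path_component_of_subset path_connected_component)
qed

lemma realization_space_eq_parametrized:
  fixes H :: "(complex^3)^'n::finite"
  assumes param: "parametrizes H \<Phi> UNIV"
  shows "realization_space (intersection_lattice H) = proj_tuple ` \<Phi> ` {z. realizes H (\<Phi> z)}"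
  unfolding realization_space_eq_realizes
proof
  show "proj_tuple ` \<Phi> ` {z. realizes H (\<Phi> z)} \<subseteq> proj_tuple ` {G. realizes H G}" by auto
next
  show "proj_tuple ` {G. realizes H G} \<subseteq> proj_tuple ` \<Phi> ` {z. realizes H (\<Phi> z)}"
  proof
    fix x assume "x \<in> proj_tuple ` {G. realizes H G}"
    then obtain G where x: "x = proj_tuple G" and G: "realizes H G" by blast
    obtain z where "\<forall>i. \<exists>c. c \<noteq> 0 \<and> \<Phi> z $ i = c *s G$i"
      using parametrizes_covers[OF param G] by blast
    then obtain c where c: "\<And>i. c i \<noteq> 0" and "\<And>i. \<Phi> z $ i = c i *s G$i" by metis
    then have \<Phi>z: "\<Phi> z = (\<chi> i. c i *s G$i)" by (simp add: vec_eq_iff)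
    have "realizes H (\<Phi> z)" unfolding \<Phi>z by (rule realizes_rescale[OF G c])
    moreover have "x = proj_tuple (\<Phi> z)" unfolding \<Phi>z x by (rule proj_tuple_rescale[OF c, symmetric])
    ultimately show "x \<in> proj_tuple ` \<Phi> ` {z. realizes H (\<Phi> z)}" by blast
  qed
qed

theorem mainTheorem4:
  fixes H :: "(complex^3)^'n::finite"
  assumes "line_arrangement H"
    and "\<not> connectedin proj_tuple_topology (realization_space (intersection_lattice H))"
  shows "\<exists>S. S \<noteq> {} \<and> (\<forall>j\<in>S. card (mult_pts H S \<inter> line_pts (H $ j)) \<ge> 3)"
proof (rule ccontr)
  assume "\<not> ?thesis"
  then have peel: "\<exists>j\<in>S. card (mult_pts H S \<inter> line_pts (H$j)) < 3" if "S \<noteq> {}" for S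
    using that by (auto simp: not_le)
  obtain \<Phi> where param: "parametrizes H \<Phi> UNIV"
    using parametrization_exists[OF assms(1) peel] by blast
  let ?U = "{z. realizes H (\<Phi> z)}"
  have poly: "vec_poly_on_lines (\<lambda>z. \<Phi> z $ i)" for i
    using parametrizes_poly[OF param] by simp
  have concurrent: "det3 (\<Phi> z $ x) (\<Phi> z $ y) (\<Phi> z $ k) = 0"
    if "x \<noteq> y" "y \<noteq> k" "x \<noteq> k" "concurrent H x y k" for z x y k
    using parametrizes_concurrent[OF param] that by simp
  have "path_connected (\<Phi> ` ?U)"
    using finite_nonrealizing_on_line[OF poly concurrent]
    by (intro path_connected_image_cofinite_on_lines[OF poly]) simp
  moreover have "\<Phi> ` ?U \<subseteq> nonzero_tuples"
    using realizes_nonzero unfolding nonzero_tuples_def by blast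
  ultimately have "path_connectedin proj_tuple_topology (proj_tuple ` \<Phi> ` ?U)"
    by (rule path_connectedin_proj_tuple_image)
  then have "connectedin proj_tuple_topology (realization_space (intersection_lattice H))"
    unfolding realization_space_eq_parametrized[OF param] by (rule path_connectedin_imp_connectedin)
  with assms(2) show False by contradiction
qed

end
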